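(* Let $G,H$ be finite groups and $f:G\to H$ an identity preserving function. Suppose $A\le H$ is an abelian subgroup with $[G,G;f]\le A$, $K\le\mathrm{Stab}_G(f)$ is a subgroup with $\gcd([G:K],|A|)=1$, $m$ is an integer with $m\,[G:K]\equiv 1\pmod{|A|}$, and $a_1,\dots,a_n$ are representatives of the right cosets of $K$ in $G$ ($G=\bigsqcup_i Ka_i$). Then the function $$x\mapsto f(x)\Bigl(\prod_{i=1}^n[a_i,x;f]\Bigr)^m$$ does not depend on the choice of $A$, $K$, $m$ or the coset representatives (subject to the stated conditions); in particular it coincides with the function obtained by taking $K=\mathrm{Stab}_G(f)$ and $A=[G,G;f]$. This function is called the distributed average $\overline{\overline f}$ of $f$.
   Context: For $f:G\to H$ and $a\in G$, $f^a(x)=f(a)^{-1}f(ax)$; $f$ is identity preserving if $f(1)=1$. $\mathrm{Stab}_G(f)=\{a\in G: f^a=f\}$, which is a subgroup when $f$ is identity preserving. The $f$-distributor is $[x,y;f]=f(y)^{-1}f(x)^{-1}f(xy)$, and $[G,G;f]=\langle [x,y;f]: x,y\in G\rangle$. *)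

theory Defs
  imports "HOL-Algebra.Algebra" "HOL-Number_Theory.Cong"
begin

definition fshift :: "('a,'c) monoid_scheme \<Rightarrow> ('b,'d) monoid_scheme \<Rightarrow> ('a \<Rightarrow> 'b) \<Rightarrow> 'a \<Rightarrow> 'a \<Rightarrow> 'b" where
  "fshift G H f a x = inv\<^bsub>H\<^esub> (f a) \<otimes>\<^bsub>H\<^esub> f (a \<otimes>\<^bsub>G\<^esub> x)"

definition Stab :: "('a,'c) monoid_scheme \<Rightarrow> ('b,'d) monoid_scheme \<Rightarrow> ('a \<Rightarrow> 'b) \<Rightarrow> 'a set" where
  "Stab G H f = {a \<in> carrier G. \<forall>x \<in> carrier G. fshift G H f a x = f x}"

definition distributor :: "('a,'c) monoid_scheme \<Rightarrow> ('b,'d) monoid_scheme \<Rightarrow> ('a \<Rightarrow> 'b) \<Rightarrow> 'a \<Rightarrow> 'a \<Rightarrow> 'b" where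
  "distributor G H f x y = inv\<^bsub>H\<^esub> (f y) \<otimes>\<^bsub>H\<^esub> inv\<^bsub>H\<^esub> (f x) \<otimes>\<^bsub>H\<^esub> f (x \<otimes>\<^bsub>G\<^esub> y)"

definition distr_subgroup :: "('a,'c) monoid_scheme \<Rightarrow> ('b,'d) monoid_scheme \<Rightarrow> ('a \<Rightarrow> 'b) \<Rightarrow> 'b set" where
  "distr_subgroup G H f =
     generate H {distributor G H f x y | x y. x \<in> carrier G \<and> y \<in> carrier G}"

definition dist_admissible ::
  "('a,'c) monoid_scheme \<Rightarrow> ('b,'d) monoid_scheme \<Rightarrow> ('a \<Rightarrow> 'b) \<Rightarrow> 'b set \<Rightarrow> 'a set \<Rightarrow> int \<Rightarrow> 'a set \<Rightarrow> bool" where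
  "dist_admissible G H f A K m R \<longleftrightarrow>
     subgroup A H \<and> (\<forall>a \<in> A. \<forall>b \<in> A. a \<otimes>\<^bsub>H\<^esub> b = b \<otimes>\<^bsub>H\<^esub> a) \<and>
     distr_subgroup G H f \<subseteq> A \<and>
     subgroup K G \<and> K \<subseteq> Stab G H f \<and>
     coprime (card (rcosets\<^bsub>G\<^esub> K)) (card A) \<and>
     [m * int (card (rcosets\<^bsub>G\<^esub> K)) = 1] (mod int (card A)) \<and>
     R \<subseteq> carrier G \<and> bij_betw (\<lambda>r. K #>\<^bsub>G\<^esub> r) R (rcosets\<^bsub>G\<^esub> K)"

definition dist_avg_with ::
  "('a,'c) monoid_scheme \<Rightarrow> ('b,'d) monoid_scheme \<Rightarrow> ('a \<Rightarrow> 'b) \<Rightarrow> 'b set \<Rightarrow> int \<Rightarrow> 'a set \<Rightarrow> 'a \<Rightarrow> 'b" where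
  "dist_avg_with G H f A m R x =
     f x \<otimes>\<^bsub>H\<^esub> (finprod (H\<lparr>carrier := A\<rparr>) (\<lambda>r. distributor G H f r x) R) [^]\<^bsub>H\<^esub> m"

end

theory Submission
  imports Defs
begin

text \<open>For a in Stab_G(f) we have f(ax) = f(a)f(x), so the distributor [r,x;f] depends only on
  the right coset Stab_G(f) r. Hence for K \<le> Stab_G(f) the product over representatives of the
  cosets of K is the product P over representatives of the cosets of Stab_G(f), raised to the
  power [Stab_G(f):K]; everything happens in the abelian group [G,G;f]. Since
  [G:K] = [G:Stab_G(f)] [Stab_G(f):K], the exponent [Stab_G(f):K] m is an inverse of
  [G:Stab_G(f)] modulo |[G,G;f]|, which divides |A|; such inverses are unique, so the value does
  not depend on the data.\<close>

lemma cong_inverse_unique_int: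
  fixes a b n q :: int
  assumes "[a * n = 1] (mod q)" "[b * n = 1] (mod q)"
  shows "[a = b] (mod q)"
proof -
  have "[a = a * (b * n)] (mod q)"
    using cong_scalar_left[OF assms(2), of a] by (simp add: cong_sym)
  also have "a * (b * n) = b * (a * n)" by (simp add: ac_simps)
  also have "[b * (a * n) = b] (mod q)"
    using cong_scalar_left[OF assms(1), of b] by simp
  finally show ?thesis .
qed

lemma (in group) comm_group_subgroupI:
  assumes "subgroup A G" and "\<And>a b. a \<in> A \<Longrightarrow> b \<in> A \<Longrightarrow> a \<otimes> b = b \<otimes> a"
  shows "comm_group (G\<lparr>carrier := A\<rparr>)"
  by (rule group.group_comm_groupI[OF subgroup.subgroup_is_group[OF assms(1) is_group]])
     (simp add: assms(2))

lemma (in group) finprod_subgroup_carrier_eq: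
  assumes A: "comm_group (G\<lparr>carrier := A\<rparr>)" and D: "subgroup D G" "D \<subseteq> A"
    and g: "g \<in> I \<rightarrow> D"
  shows "finprod (G\<lparr>carrier := A\<rparr>) g I = finprod (G\<lparr>carrier := D\<rparr>) g I"
proof (cases "finite I")
  case True
  interpret A: comm_group "G\<lparr>carrier := A\<rparr>" by (rule A)
  interpret D: comm_group "G\<lparr>carrier := D\<rparr>"
    using comm_group_subgroupI[OF D(1)] A.m_comm D(2) by (simp add: subset_iff)
  show ?thesis using True g
  proof (induction I rule: finite_induct)
    case (insert i I)
    then have "g \<in> insert i I \<rightarrow> A" using D(2) by blast
    with insert show ?case
      by (simp add: A.finprod_insert D.finprod_insert Pi_iff)
  qed simp
qed (simp add: finprod_def)

lemma (in comm_group) finprod_nat_pow: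
  assumes "g \<in> I \<rightarrow> carrier G"
  shows "finprod G (\<lambda>i. g i [^] (n::nat)) I = finprod G g I [^] n"
proof (induction n)
  case (Suc n)
  have "finprod G (\<lambda>i. g i [^] Suc n) I = finprod G (\<lambda>i. g i [^] n \<otimes> g i) I" by simp
  also have "\<dots> = finprod G (\<lambda>i. g i [^] n) I \<otimes> finprod G g I"
    by (rule finprod_multf) (use assms in auto)
  finally show ?case using Suc by simp
qed simp

lemma (in group) int_pow_cong_card_subgroup:
  assumes D: "subgroup D G" and x: "x \<in> D" and e: "[e1 = e2] (mod int (card D))"
  shows "x [^] e1 = x [^] e2"
proof -
  interpret D: group "G\<lparr>carrier := D\<rparr>" using subgroup.subgroup_is_group[OF D is_group] .
  have "int (D.ord x) dvd int (card D)"
    using D.ord_dvd_group_order x by (simp add: order_def)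
  also have "int (card D) dvd e2 - e1" using cong_sym[OF e] by (simp add: cong_iff_dvd_diff)
  finally have "x [^]\<^bsub>G\<lparr>carrier := D\<rparr>\<^esub> e1 = x [^]\<^bsub>G\<lparr>carrier := D\<rparr>\<^esub> e2"
    using D.int_pow_eq x by simp
  then show ?thesis using int_pow_consistent[OF D x] by simp
qed

lemma (in group) card_subgroup_dvd:
  assumes "subgroup I G" "subgroup J G" "I \<subseteq> J"
  shows "card I dvd card J"
proof -
  interpret J: group "G\<lparr>carrier := J\<rparr>" using subgroup.subgroup_is_group[OF assms(2) is_group] .
  have "card (rcosets\<^bsub>G\<lparr>carrier := J\<rparr>\<^esub> I) * card I = card J"
    using J.lagrange[OF subgroup_incl[OF assms]] by (simp add: order_def)
  then show ?thesis by (metis dvd_triv_right)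
qed

lemma (in group) card_rcosets_tower:
  assumes fin: "finite (carrier G)" and K: "subgroup K G" and S: "subgroup S G" and KS: "K \<subseteq> S"
  shows "card (rcosets K) = card (rcosets S) * (card S div card K)"
proof -
  have "card K > 0"
    using finite_subset[OF subgroup.subset[OF K] fin] subgroup.one_closed[OF K]
    by (auto simp: card_gt_0_iff)
  moreover have "card S = card S div card K * card K"
    using card_subgroup_dvd[OF K S KS] by simp
  moreover have "card (rcosets K) * card K = card (rcosets S) * card S"
    using lagrange[OF K] lagrange[OF S] by simp
  ultimately show ?thesis by (metis mult.assoc mult_right_cancel not_gr0)
qed

lemma (in group) rcoset_representatives_exist:
  assumes K: "subgroup K G"
  obtains R where "R \<subseteq> carrier G" "bij_betw (\<lambda>r. K #> r) R (rcosets K)"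
proof -
  define rep where "rep c = (SOME r. r \<in> c)" for c :: "'a set"
  have rep: "rep c \<in> c" "K #> rep c = c" if c: "c \<in> rcosets K" for c
  proof -
    obtain a where a: "a \<in> carrier G" "c = K #> a" using c unfolding RCOSETS_def by auto
    have "a \<in> c" using a rcos_self[OF a(1) K] by simp
    then show r: "rep c \<in> c" unfolding rep_def by (rule someI)
    show "K #> rep c = c" using repr_independence[OF _ a(1) K] r a(2) by simp
  qed
  have "rep ` (rcosets K) \<subseteq> carrier G"
    using rep(1) rcosets_part_G[OF K] by blast
  moreover have "bij_betw (\<lambda>r. K #> r) (rep ` (rcosets K)) (rcosets K)"
    unfolding bij_betw_def
  proof
    show "inj_on (\<lambda>r. K #> r) (rep ` (rcosets K))"
      unfolding inj_on_def using rep(2) by auto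
    show "(\<lambda>r. K #> r) ` rep ` (rcosets K) = rcosets K"
      using rep(2) by (auto simp: image_image)
  qed
  ultimately show thesis by (rule that)
qed

lemma (in group) representative_of_rcoset:
  assumes K: "subgroup K G" and R: "bij_betw (\<lambda>r. K #> r) R (rcosets K)" and g: "g \<in> carrier G"
  obtains r where "r \<in> R" "g \<in> K #> r"
proof -
  obtain r where "r \<in> R" "K #> r = K #> g"
    using R rcosetsI[OF subgroup.subset[OF K] g] unfolding bij_betw_def by (metis imageE)
  then show thesis using that rcos_self[OF g K] by simp
qed

lemma (in group) representatives_rcosets_disjoint:
  assumes K: "subgroup K G" and R: "bij_betw (\<lambda>r. K #> r) R (rcosets K)"
    and "r \<in> R" "r' \<in> R" "r \<noteq> r'"
  shows "disjnt (K #> r) (K #> r')"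
proof -
  have "K #> r \<noteq> K #> r'" using R assms(3-5) unfolding bij_betw_def inj_on_def by auto
  moreover have "K #> r \<in> rcosets K" "K #> r' \<in> rcosets K"
    using R assms(3,4) unfolding bij_betw_def by auto
  ultimately show ?thesis using rcos_disjoint[OF K] unfolding pairwise_def disjnt_def by blast
qed

lemma (in group) rcoset_eq_UN_representatives:
  assumes K: "subgroup K G" and S: "subgroup S G" and KS: "K \<subseteq> S"
    and R: "R \<subseteq> carrier G" "bij_betw (\<lambda>r. K #> r) R (rcosets K)" and a: "a \<in> carrier G"
  shows "S #> a = (\<Union>r \<in> R \<inter> (S #> a). K #> r)"
proof (intro equalityI subsetI)
  fix g assume g: "g \<in> S #> a"
  have gc: "g \<in> carrier G" using g a r_coset_subset_G[OF subgroup.subset[OF S]] by blast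
  obtain r where r: "r \<in> R" "g \<in> K #> r" using representative_of_rcoset[OF K R(2) gc] .
  have rc: "r \<in> carrier G" using r(1) R(1) by auto
  have "S #> g = S #> r"
    using repr_independence[OF _ rc S] r(2) KS unfolding r_coset_def by blast
  then have "r \<in> S #> a" using repr_independence[OF g a S] rcos_self[OF rc S] by simp
  with r show "g \<in> (\<Union>r \<in> R \<inter> (S #> a). K #> r)" by blast
next
  fix g assume "g \<in> (\<Union>r \<in> R \<inter> (S #> a). K #> r)"
  then obtain r where r: "r \<in> R" "r \<in> S #> a" "g \<in> K #> r" by blast
  have "S #> r = S #> a" using repr_independence[OF r(2) a S] by simp
  moreover have "g \<in> S #> r" using r(3) KS unfolding r_coset_def by blast
  ultimately show "g \<in> S #> a" by simp
qed

lemma (in group) card_representatives_in_rcoset: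
  assumes fin: "finite (carrier G)" and K: "subgroup K G" and S: "subgroup S G" and KS: "K \<subseteq> S"
    and R: "R \<subseteq> carrier G" "bij_betw (\<lambda>r. K #> r) R (rcosets K)" and a: "a \<in> carrier G"
  shows "card (R \<inter> (S #> a)) = card S div card K"
proof -
  have Ksub: "K \<subseteq> carrier G" using subgroup.subset[OF K] .
  have "card S = card (S #> a)"
    using card_rcosets_equal[OF rcosetsI[OF subgroup.subset[OF S] a] subgroup.subset[OF S]] .
  also have "\<dots> = card (\<Union>r \<in> R \<inter> (S #> a). K #> r)"
    by (rule arg_cong[OF rcoset_eq_UN_representatives[OF K S KS R a]])
  also have "\<dots> = (\<Sum>r \<in> R \<inter> (S #> a). card (K #> r))"
  proof (rule card_UN_disjoint)
    show "finite (R \<inter> (S #> a))" using finite_subset[OF R(1) fin] by simp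
    show "\<forall>r \<in> R \<inter> (S #> a). finite (K #> r)"
      using R(1) fin r_coset_subset_G[OF Ksub] finite_subset by blast
    show "\<forall>r \<in> R \<inter> (S #> a). \<forall>r' \<in> R \<inter> (S #> a). r \<noteq> r' \<longrightarrow> (K #> r) \<inter> (K #> r') = {}"
      using representatives_rcosets_disjoint[OF K R(2)] by (simp add: disjnt_def)
  qed
  also have "\<dots> = (\<Sum>r \<in> R \<inter> (S #> a). card K)"
    using card_rcosets_equal[OF rcosetsI[OF Ksub] Ksub] R(1) by (intro sum.cong) auto
  also have "\<dots> = card (R \<inter> (S #> a)) * card K" by simp
  finally have "card S = card (R \<inter> (S #> a)) * card K" .
  moreover have "card K > 0"
    using finite_subset[OF Ksub fin] subgroup.one_closed[OF K] by (auto simp: card_gt_0_iff)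
  ultimately show ?thesis by simp
qed

lemma (in group) finprod_representatives_refine:
  assumes fin: "finite (carrier G)" and M: "comm_group M"
    and K: "subgroup K G" and S: "subgroup S G" and KS: "K \<subseteq> S"
    and R: "R \<subseteq> carrier G" "bij_betw (\<lambda>r. K #> r) R (rcosets K)"
    and R0: "R0 \<subseteq> carrier G" "bij_betw (\<lambda>r. S #> r) R0 (rcosets S)"
    and g: "g \<in> carrier G \<rightarrow> carrier M"
    and g_const: "\<And>s r. s \<in> S \<Longrightarrow> r \<in> carrier G \<Longrightarrow> g (s \<otimes> r) = g r"
  shows "finprod M g R = finprod M g R0 [^]\<^bsub>M\<^esub> (card S div card K)"
proof -
  interpret M: comm_group M by (rule M)
  have R_eq: "R = (\<Union>a \<in> R0. R \<inter> (S #> a))"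
  proof (intro equalityI subsetI)
    fix r assume r: "r \<in> R"
    then have "r \<in> carrier G" using R(1) by auto
    then obtain a where "a \<in> R0" "r \<in> S #> a" by (rule representative_of_rcoset[OF S R0(2)])
    with r show "r \<in> (\<Union>a \<in> R0. R \<inter> (S #> a))" by blast
  qed blast
  have slice: "finprod M g (R \<inter> (S #> a)) = g a [^]\<^bsub>M\<^esub> (card S div card K)" if a: "a \<in> R0" for a
  proof -
    have ac: "a \<in> carrier G" using a R0(1) by auto
    have "finprod M g (R \<inter> (S #> a)) = finprod M (\<lambda>_. g a) (R \<inter> (S #> a))"
      by (rule M.finprod_cong') (use g ac R(1) g_const in \<open>auto simp: r_coset_def\<close>)
    also have "\<dots> = g a [^]\<^bsub>M\<^esub> card (R \<inter> (S #> a))"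
      by (rule M.finprod_const) (use g ac in blast)
    also have "card (R \<inter> (S #> a)) = card S div card K"
      by (rule card_representatives_in_rcoset[OF fin K S KS R ac])
    finally show ?thesis .
  qed
  have "finprod M g R = finprod M g (\<Union>a \<in> R0. R \<inter> (S #> a))"
    by (rule arg_cong[OF R_eq])
  also have "\<dots> = finprod M (\<lambda>a. finprod M g (R \<inter> (S #> a))) R0"
  proof (rule M.finprod_UN_disjoint)
    show "pairwise (\<lambda>a b. disjnt (R \<inter> (S #> a)) (R \<inter> (S #> b))) R0"
      using representatives_rcosets_disjoint[OF S R0(2)] by (simp add: pairwise_def disjnt_def) blast
  qed (use finite_subset[OF R(1) fin] finite_subset[OF R0(1) fin] g R(1) in auto)
  also have "\<dots> = finprod M (\<lambda>a. g a [^]\<^bsub>M\<^esub> (card S div card K)) R0"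
    by (rule M.finprod_cong') (use slice g R0(1) in auto)
  also have "\<dots> = finprod M g R0 [^]\<^bsub>M\<^esub> (card S div card K)"
    by (rule M.finprod_nat_pow) (use g R0(1) in auto)
  finally show ?thesis .
qed

locale identity_preserving_map = G: group G + H: group H for G (structure) and H and f +
  assumes f_closed: "f \<in> carrier G \<rightarrow> carrier H" and f_one: "f \<one> = \<one>\<^bsub>H\<^esub>"
begin

abbreviation "S \<equiv> Stab G H f"
abbreviation "D \<equiv> distr_subgroup G H f"
abbreviation "d \<equiv> distributor G H f"

lemma f_in_carrier [simp]: "x \<in> carrier G \<Longrightarrow> f x \<in> carrier H"
  using f_closed by blast

lemma mem_Stab_iff: "a \<in> S \<longleftrightarrow> a \<in> carrier G \<and> (\<forall>x \<in> carrier G. f (a \<otimes> x) = f a \<otimes>\<^bsub>H\<^esub> f x)"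
proof -
  have "inv\<^bsub>H\<^esub> (f a) \<otimes>\<^bsub>H\<^esub> f (a \<otimes> x) = f x \<longleftrightarrow> f (a \<otimes> x) = f a \<otimes>\<^bsub>H\<^esub> f x"
    if "a \<in> carrier G" "x \<in> carrier G" for x
    using that by (metis G.m_closed H.inv_solve_left f_in_carrier)
  then show ?thesis unfolding Stab_def fshift_def by auto
qed

lemma Stab_mult: "a \<in> S \<Longrightarrow> x \<in> carrier G \<Longrightarrow> f (a \<otimes> x) = f a \<otimes>\<^bsub>H\<^esub> f x"
  using mem_Stab_iff by blast

lemma subgroup_Stab: "subgroup S G"
proof
  show "S \<subseteq> carrier G" using mem_Stab_iff by blast
  show "\<one> \<in> S" using f_one by (auto simp: mem_Stab_iff)
next
  fix a b assume a: "a \<in> S" and b: "b \<in> S"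
  then have "a \<in> carrier G" "b \<in> carrier G" using mem_Stab_iff by auto
  then show "a \<otimes> b \<in> S"
    using Stab_mult[OF a] Stab_mult[OF b] by (auto simp: mem_Stab_iff G.m_assoc H.m_assoc)
next
  fix a assume a: "a \<in> S"
  then have ac: "a \<in> carrier G" using mem_Stab_iff by auto
  have f_inv_mult: "f (inv a \<otimes> x) = inv\<^bsub>H\<^esub> (f a) \<otimes>\<^bsub>H\<^esub> f x" if x: "x \<in> carrier G" for x
  proof -
    have "f x = f a \<otimes>\<^bsub>H\<^esub> f (inv a \<otimes> x)"
      using Stab_mult[OF a, of "inv a \<otimes> x"] ac x by (simp add: G.m_assoc[symmetric])
    then show ?thesis using ac x by (simp add: H.inv_solve_left)
  qed
  moreover have "f (inv a) = inv\<^bsub>H\<^esub> (f a)" using f_inv_mult[of \<one>] ac f_one by simp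
  ultimately show "inv a \<in> S" using ac by (auto simp: mem_Stab_iff)
qed

lemma distributor_Stab_left:
  assumes s: "s \<in> S" and r: "r \<in> carrier G" and x: "x \<in> carrier G"
  shows "d (s \<otimes> r) x = d r x"
proof -
  have sc: "s \<in> carrier G" using s mem_Stab_iff by auto
  have "d (s \<otimes> r) x = inv\<^bsub>H\<^esub> (f x) \<otimes>\<^bsub>H\<^esub> inv\<^bsub>H\<^esub> (f s \<otimes>\<^bsub>H\<^esub> f r) \<otimes>\<^bsub>H\<^esub> (f s \<otimes>\<^bsub>H\<^esub> f (r \<otimes> x))"
    unfolding distributor_def using Stab_mult[OF s] sc r x by (simp add: G.m_assoc)
  also have "\<dots> = d r x"
    unfolding distributor_def using sc r x
    by (simp add: H.inv_mult_group H.m_assoc[symmetric]) (simp add: H.m_assoc)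
  finally show ?thesis .
qed

lemma subgroup_distr_subgroup: "subgroup D H"
  unfolding distr_subgroup_def by (rule H.generate_is_subgroup) (auto simp: distributor_def)

lemma distributor_in_distr_subgroup: "r \<in> carrier G \<Longrightarrow> x \<in> carrier G \<Longrightarrow> d r x \<in> D"
  unfolding distr_subgroup_def by (rule generate.incl) blast

end

locale finite_identity_preserving_map = identity_preserving_map +
  assumes finite_G: "finite (carrier G)"
begin

lemma admissible_Stab_exists:
  assumes "dist_admissible G H f A K m R"
  obtains m0 R0 where "dist_admissible G H f D S m0 R0"
proof -
  from assms have A: "subgroup A H" and ab: "\<forall>a\<in>A. \<forall>b\<in>A. a \<otimes>\<^bsub>H\<^esub> b = b \<otimes>\<^bsub>H\<^esub> a"
    and DA: "D \<subseteq> A" and K: "subgroup K G" "K \<subseteq> S"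
    and cop: "coprime (card (rcosets K)) (card A)"
    unfolding dist_admissible_def by auto
  obtain R0 where R0: "R0 \<subseteq> carrier G" "bij_betw (\<lambda>r. S #> r) R0 (rcosets S)"
    using G.rcoset_representatives_exist[OF subgroup_Stab] .
  have "card (rcosets S) dvd card (rcosets K)"
    using G.card_rcosets_tower[OF finite_G K(1) subgroup_Stab K(2)] by simp
  moreover have "card D dvd card A" by (rule H.card_subgroup_dvd[OF subgroup_distr_subgroup A DA])
  ultimately have cop0: "coprime (card (rcosets S)) (card D)" using cop by (rule coprime_divisors)
  then obtain m0 where "[int (card (rcosets S)) * m0 = 1] (mod int (card D))"
    using cong_solve_coprime_int by (metis coprime_int_iff)
  then have "[m0 * int (card (rcosets S)) = 1] (mod int (card D))" by (simp add: mult.commute)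
  with cop0 R0 ab DA show thesis
    using that subgroup_distr_subgroup subgroup_Stab unfolding dist_admissible_def by blast
qed

lemma finprod_distributors_eq_pow:
  assumes A: "comm_group (H\<lparr>carrier := A\<rparr>)" and DA: "D \<subseteq> A"
    and K: "subgroup K G" "K \<subseteq> S"
    and R: "R \<subseteq> carrier G" "bij_betw (\<lambda>r. K #> r) R (rcosets K)"
    and R0: "R0 \<subseteq> carrier G" "bij_betw (\<lambda>r. S #> r) R0 (rcosets S)"
    and x: "x \<in> carrier G"
  shows "finprod (H\<lparr>carrier := A\<rparr>) (\<lambda>r. d r x) R
       = finprod (H\<lparr>carrier := D\<rparr>) (\<lambda>r. d r x) R0 [^]\<^bsub>H\<^esub> (card S div card K)"
proof -
  interpret A: comm_group "H\<lparr>carrier := A\<rparr>" by (rule A)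
  have D_comm: "comm_group (H\<lparr>carrier := D\<rparr>)"
    using H.comm_group_subgroupI[OF subgroup_distr_subgroup] A.m_comm DA by (simp add: subset_iff)
  have dD: "(\<lambda>r. d r x) \<in> carrier G \<rightarrow> D" using distributor_in_distr_subgroup x by blast
  have "finprod (H\<lparr>carrier := A\<rparr>) (\<lambda>r. d r x) R = finprod (H\<lparr>carrier := D\<rparr>) (\<lambda>r. d r x) R"
    by (rule H.finprod_subgroup_carrier_eq[OF A subgroup_distr_subgroup DA]) (use dD R(1) in auto)
  also have "\<dots> = finprod (H\<lparr>carrier := D\<rparr>) (\<lambda>r. d r x) R0 [^]\<^bsub>H\<lparr>carrier := D\<rparr>\<^esub> (card S div card K)"
  proof (rule G.finprod_representatives_refine[OF finite_G D_comm K(1) subgroup_Stab K(2) R R0])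
    show "(\<lambda>r. d r x) \<in> carrier G \<rightarrow> carrier (H\<lparr>carrier := D\<rparr>)" using dD by simp
    show "d (s \<otimes> r) x = d r x" if "s \<in> S" "r \<in> carrier G" for s r
      using distributor_Stab_left[OF that x] .
  qed
  finally show ?thesis by (simp add: H.nat_pow_consistent[symmetric])
qed

lemma admissible_exponent_cong:
  assumes adm: "dist_admissible G H f A K m R"
    and m0: "[m0 * int (card (rcosets S)) = 1] (mod int (card D))"
  shows "[int (card S div card K) * m = m0] (mod int (card D))"
proof (rule cong_inverse_unique_int[OF _ m0])
  from adm have A: "subgroup A H" and DA: "D \<subseteq> A" and K: "subgroup K G" "K \<subseteq> S"
    and m: "[m * int (card (rcosets K)) = 1] (mod int (card A))"
    unfolding dist_admissible_def by auto
  have "card (rcosets K) = card (rcosets S) * (card S div card K)"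
    by (rule G.card_rcosets_tower[OF finite_G K(1) subgroup_Stab K(2)])
  moreover have "card D dvd card A" by (rule H.card_subgroup_dvd[OF subgroup_distr_subgroup A DA])
  ultimately show "[int (card S div card K) * m * int (card (rcosets S)) = 1] (mod int (card D))"
    using cong_dvd_modulus[OF m] by (simp add: ac_simps)
qed

lemma dist_avg_with_eq_Stab:
  assumes adm: "dist_admissible G H f A K m R" and adm0: "dist_admissible G H f D S m0 R0"
    and x: "x \<in> carrier G"
  shows "dist_avg_with G H f A m R x = dist_avg_with G H f D m0 R0 x"
proof -
  from adm have A: "subgroup A H" and ab: "\<forall>a\<in>A. \<forall>b\<in>A. a \<otimes>\<^bsub>H\<^esub> b = b \<otimes>\<^bsub>H\<^esub> a"
    and DA: "D \<subseteq> A" and K: "subgroup K G" "K \<subseteq> S"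
    and R: "R \<subseteq> carrier G" "bij_betw (\<lambda>r. K #> r) R (rcosets K)"
    unfolding dist_admissible_def by auto
  from adm0 have D_comm: "comm_group (H\<lparr>carrier := D\<rparr>)"
    and m0: "[m0 * int (card (rcosets S)) = 1] (mod int (card D))"
    and R0: "R0 \<subseteq> carrier G" "bij_betw (\<lambda>r. S #> r) R0 (rcosets S)"
    unfolding dist_admissible_def using H.comm_group_subgroupI by auto
  interpret D: comm_group "H\<lparr>carrier := D\<rparr>" by (rule D_comm)
  define N where "N = card S div card K"
  define P where "P = finprod (H\<lparr>carrier := D\<rparr>) (\<lambda>r. d r x) R0"
  have "P \<in> carrier (H\<lparr>carrier := D\<rparr>)"
    unfolding P_def by (rule D.finprod_closed) (use distributor_in_distr_subgroup x R0(1) in auto)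
  then have P_D: "P \<in> D" by simp
  then have P: "P \<in> carrier H" using subgroup.subset[OF subgroup_distr_subgroup] by blast
  have "finprod (H\<lparr>carrier := A\<rparr>) (\<lambda>r. d r x) R = P [^]\<^bsub>H\<^esub> N"
    unfolding P_def N_def
    by (rule finprod_distributors_eq_pow[OF H.comm_group_subgroupI[OF A] DA K R R0 x]) (use ab in blast)
  moreover have "(P [^]\<^bsub>H\<^esub> N) [^]\<^bsub>H\<^esub> m = P [^]\<^bsub>H\<^esub> (int N * m)"
    using H.int_pow_pow[OF P, of "int N" m] by (simp add: int_pow_int)
  moreover have "\<dots> = P [^]\<^bsub>H\<^esub> m0"
    using H.int_pow_cong_card_subgroup[OF subgroup_distr_subgroup P_D]
      admissible_exponent_cong[OF adm m0] unfolding N_def by blast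
  ultimately show ?thesis unfolding dist_avg_with_def P_def by simp
qed
end

theorem mainTheorem11:
  fixes G :: "('a,'c) monoid_scheme" and H :: "('b,'d) monoid_scheme" and f :: "'a \<Rightarrow> 'b"
  assumes "group G" and "group H"
    and "finite (carrier G)" and "finite (carrier H)"
    and "f \<in> carrier G \<rightarrow> carrier H"
    and "f \<one>\<^bsub>G\<^esub> = \<one>\<^bsub>H\<^esub>"
    and "dist_admissible G H f A K m R"
  shows "(\<forall>A' K' m' R'. dist_admissible G H f A' K' m' R' \<longrightarrow>
            (\<forall>x \<in> carrier G. dist_avg_with G H f A' m' R' x = dist_avg_with G H f A m R x))
       \<and> (\<exists>m0 R0. dist_admissible G H f (distr_subgroup G H f) (Stab G H f) m0 R0 \<and>
            (\<forall>x \<in> carrier G. dist_avg_with G H f (distr_subgroup G H f) m0 R0 x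
                              = dist_avg_with G H f A m R x))"
proof -
  interpret finite_identity_preserving_map G H f
    using assms(1,2,3,5,6)
    by (simp add: finite_identity_preserving_map_def finite_identity_preserving_map_axioms_def
        identity_preserving_map_def identity_preserving_map_axioms_def)
  obtain m0 R0 where adm0: "dist_admissible G H f D S m0 R0"
    using admissible_Stab_exists[OF assms(7)] .
  have "dist_avg_with G H f A' m' R' x = dist_avg_with G H f D m0 R0 x"
    if "dist_admissible G H f A' K' m' R'" "x \<in> carrier G" for A' K' m' R' x
    using dist_avg_with_eq_Stab[OF that(1) adm0 that(2)] .
  with assms(7) adm0 show ?thesis by metis
qed

end
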